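(* Let $G=(N,A)$ be an arc-compressed $s$-$t$ DAG and let $uv\in A$. Then $\mathrm{ext}(uv)$ is a maximal safe sequence of arcs (for arc-path covers) if and only if $uv$ is a leaf in both the arc $s$-dominator tree and the arc $t$-dominator tree of $G$.
   Context: An $s$-$t$ DAG is a directed acyclic multigraph (parallel arcs allowed) with a unique source $s$ and a unique sink $t$ such that every node is reachable from $s$ and every node reaches $t$. It is arc-compressed if no node has both indegree exactly one and outdegree exactly one. An arc $ab$ $s$-dominates an arc $cd$ if $ab=cd$ or every $s$-$c$ path contains $ab$; $ab$ $t$-dominates $cd$ if $ab=cd$ or every $d$-$t$ path contains $ab$; strictly if also $ab\neq cd$. The immediate $s$-dominator of $cd$ is the strict $s$-dominator of $cd$ that is $s$-dominated by all its strict $s$-dominators. The arc $s$-dominator tree has node set $A$ plus an abstract root, the parent of an arc being its immediate $s$-dominator, or the root if it has no strict $s$-dominator; the arc $t$-dominator tree is defined symmetrically. An arc is a leaf if it is the parent of no arc. An arc $ab$ is a $x$-$y$ bridge if every $x$-$y$ path contains it; $\mathrm{ext}(uv)$ is the sequence of $s$-$u$ bridges (in path order), followed by $uv$, followed by the sequence of $v$-$t$ bridges. A sequence of arcs is a list of arcs each of which reaches the next (arc $ab$ reaches $cd$ if there is a $b$-$c$ path); $X$ is a subsequence of $Y$ if every arc of $X$ occurs in $Y$. An arc-path cover is a set of $s$-$t$ paths covering every arc. $X$ is safe if in every arc-path cover it is a subsequence of some path of the cover (sequences in no $s$-$t$ path are unsafe); it is maximal safe if it is safe and not a proper subsequence of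 another safe sequence of arcs. *)

theory Defs
  imports "Graph_Theory.Digraph" "Graph_Theory.Arc_Walk"
begin

(* Directed multigraph G (parallel arcs allowed: arcs are abstract objects with tail/head).
   Paths are arc lists (pre_digraph.apath); an x-x path may be empty. *)

definition is_dag :: "('v,'e) pre_digraph \<Rightarrow> bool" where
  "is_dag G \<longleftrightarrow> (\<forall>u p. pre_digraph.awalk G u p u \<longrightarrow> p = [])"

definition st_dag :: "('v,'e) pre_digraph \<Rightarrow> 'v \<Rightarrow> 'v \<Rightarrow> bool" where
  "st_dag G s t \<longleftrightarrow> fin_digraph G \<and> is_dag G \<and> s \<in> verts G \<and> t \<in> verts G
     \<and> {v \<in> verts G. in_degree G v = 0} = {s}
     \<and> {v \<in> verts G. out_degree G v = 0} = {t}
     \<and> (\<forall>v \<in> verts G. (\<exists>p. pre_digraph.apath G s p v) \<and> (\<exists>p. pre_digraph.apath G v p t))"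

definition arc_compressed :: "('v,'e) pre_digraph \<Rightarrow> bool" where
  "arc_compressed G \<longleftrightarrow> (\<forall>v \<in> verts G. \<not> (in_degree G v = 1 \<and> out_degree G v = 1))"

definition s_dom :: "('v,'e) pre_digraph \<Rightarrow> 'v \<Rightarrow> 'e \<Rightarrow> 'e \<Rightarrow> bool" where
  "s_dom G s ab cd \<longleftrightarrow> ab = cd \<or> (\<forall>p. pre_digraph.apath G s p (tail G cd) \<longrightarrow> ab \<in> set p)"

definition t_dom :: "('v,'e) pre_digraph \<Rightarrow> 'v \<Rightarrow> 'e \<Rightarrow> 'e \<Rightarrow> bool" where
  "t_dom G t ab cd \<longleftrightarrow> ab = cd \<or> (\<forall>p. pre_digraph.apath G (head G cd) p t \<longrightarrow> ab \<in> set p)"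

definition strict_s_dom :: "('v,'e) pre_digraph \<Rightarrow> 'v \<Rightarrow> 'e \<Rightarrow> 'e \<Rightarrow> bool" where
  "strict_s_dom G s ab cd \<longleftrightarrow> ab \<in> arcs G \<and> s_dom G s ab cd \<and> ab \<noteq> cd"

definition strict_t_dom :: "('v,'e) pre_digraph \<Rightarrow> 'v \<Rightarrow> 'e \<Rightarrow> 'e \<Rightarrow> bool" where
  "strict_t_dom G t ab cd \<longleftrightarrow> ab \<in> arcs G \<and> t_dom G t ab cd \<and> ab \<noteq> cd"

definition is_idom_s :: "('v,'e) pre_digraph \<Rightarrow> 'v \<Rightarrow> 'e \<Rightarrow> 'e \<Rightarrow> bool" where
  "is_idom_s G s x e \<longleftrightarrow> strict_s_dom G s x e \<and> (\<forall>y. strict_s_dom G s y e \<longrightarrow> s_dom G s y x)"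

definition is_idom_t :: "('v,'e) pre_digraph \<Rightarrow> 'v \<Rightarrow> 'e \<Rightarrow> 'e \<Rightarrow> bool" where
  "is_idom_t G t x e \<longleftrightarrow> strict_t_dom G t x e \<and> (\<forall>y. strict_t_dom G t y e \<longrightarrow> t_dom G t y x)"

definition s_dom_leaf :: "('v,'e) pre_digraph \<Rightarrow> 'v \<Rightarrow> 'e \<Rightarrow> bool" where
  "s_dom_leaf G s a \<longleftrightarrow> \<not> (\<exists>e \<in> arcs G. is_idom_s G s a e)"

definition t_dom_leaf :: "('v,'e) pre_digraph \<Rightarrow> 'v \<Rightarrow> 'e \<Rightarrow> bool" where
  "t_dom_leaf G t a \<longleftrightarrow> \<not> (\<exists>e \<in> arcs G. is_idom_t G t a e)"

definition bridge :: "('v,'e) pre_digraph \<Rightarrow> 'v \<Rightarrow> 'v \<Rightarrow> 'e \<Rightarrow> bool" where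
  "bridge G x y ab \<longleftrightarrow> ab \<in> arcs G \<and> (\<forall>p. pre_digraph.apath G x p y \<longrightarrow> ab \<in> set p)"

(* ext(uv): s-u bridges in path order (order along an s-u path), uv, v-t bridges in path order *)
definition ext :: "('v,'e) pre_digraph \<Rightarrow> 'v \<Rightarrow> 'v \<Rightarrow> 'e \<Rightarrow> 'e list" where
  "ext G s t uv =
     filter (bridge G s (tail G uv)) (SOME p. pre_digraph.apath G s p (tail G uv))
     @ [uv] @
     filter (bridge G (head G uv) t) (SOME p. pre_digraph.apath G (head G uv) p t)"

definition arc_reaches :: "('v,'e) pre_digraph \<Rightarrow> 'e \<Rightarrow> 'e \<Rightarrow> bool" where
  "arc_reaches G ab cd \<longleftrightarrow> (\<exists>p. pre_digraph.apath G (head G ab) p (tail G cd))"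

definition arc_sequence :: "('v,'e) pre_digraph \<Rightarrow> 'e list \<Rightarrow> bool" where
  "arc_sequence G X \<longleftrightarrow> set X \<subseteq> arcs G \<and>
     (\<forall>i. Suc i < length X \<longrightarrow> arc_reaches G (X ! i) (X ! Suc i))"

definition subseq_arcs :: "'e list \<Rightarrow> 'e list \<Rightarrow> bool" where
  "subseq_arcs X Y \<longleftrightarrow> set X \<subseteq> set Y"

definition arc_path_cover :: "('v,'e) pre_digraph \<Rightarrow> 'v \<Rightarrow> 'v \<Rightarrow> 'e list set \<Rightarrow> bool" where
  "arc_path_cover G s t C \<longleftrightarrow> (\<forall>P \<in> C. pre_digraph.apath G s P t) \<and> (\<forall>e \<in> arcs G. \<exists>P \<in> C. e \<in> set P)"

definition safe :: "('v,'e) pre_digraph \<Rightarrow> 'v \<Rightarrow> 'v \<Rightarrow> 'e list \<Rightarrow> bool" where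
  "safe G s t X \<longleftrightarrow> arc_sequence G X \<and>
     (\<exists>P. pre_digraph.apath G s P t \<and> subseq_arcs X P) \<and>
     (\<forall>C. arc_path_cover G s t C \<longrightarrow> (\<exists>P \<in> C. subseq_arcs X P))"

definition maximal_safe :: "('v,'e) pre_digraph \<Rightarrow> 'v \<Rightarrow> 'v \<Rightarrow> 'e list \<Rightarrow> bool" where
  "maximal_safe G s t X \<longleftrightarrow> safe G s t X \<and>
     \<not> (\<exists>Y. safe G s t Y \<and> subseq_arcs X Y \<and> X \<noteq> Y)"

end

theory Submission
  imports Defs
begin

(* By acyclicity, ext(a) is exactly the set of arcs lying on every s-t path through a, so every
   safe sequence is contained in some ext(a), and an arc sequence is determined by its set of arcs;
   hence ext(uv) is maximal safe iff no ext(a) strictly contains it.  A strict containment means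
   that uv strictly dominates a in one of the two trees.  Conversely, if uv strictly s-dominates
   some arc, every s-path to v passes through uv, so v has indegree one and, the graph being
   arc-compressed, two out-arcs f and f'; then ext(f) contains ext(uv) and also f, which the
   s-t paths through uv and f' avoid.  The t-side follows by reversing all arcs. *)

lemma sorted_wrt_unique:
  assumes "asymp_on (set xs) R" "sorted_wrt R xs" "sorted_wrt R ys" "set xs = set ys"
  shows "xs = ys"
  using assms
proof (induction xs arbitrary: ys)
  case Nil
  then show ?case by simp
next
  case (Cons x xs)
  then obtain y ys' where ys: "ys = y # ys'"
    by (cases ys) auto
  have asym: "asymp_on (set (x # xs)) R"
    using Cons.prems(1) .
  have "x = y"
  proof (rule ccontr)
    assume "x \<noteq> y"
    then have "R y x" "R x y"
      using Cons.prems ys by auto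
    then show False
      using asym Cons.prems(4) ys by (auto dest: asymp_onD)
  qed
  moreover have "x \<notin> set xs" "y \<notin> set ys'"
    using Cons.prems ys asym by (auto dest: asymp_onD)
  ultimately have "set xs = set ys'"
    using Cons.prems ys by auto
  moreover have "asymp_on (set xs) R"
    using asym by (rule asymp_on_subset) auto
  ultimately show ?case
    using Cons ys \<open>x = y\<close> by auto
qed

context wf_digraph
begin

lemma awalk_split_at_arc:
  assumes "awalk u p v" "e \<in> set p"
  obtains p1 p2 where "p = p1 @ e # p2" "awalk u p1 (tail G e)" "awalk (head G e) p2 v"
proof -
  obtain p1 p2 where p: "p = p1 @ e # p2"
    using split_list[OF assms(2)] by blast
  then show thesis
    using assms(1) that by (auto simp: awalk_Cons_iff)
qed

lemma awalk_via_arc: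
  "awalk u p (tail G e) \<Longrightarrow> e \<in> arcs G \<Longrightarrow> awalk (head G e) q v \<Longrightarrow> awalk u (p @ e # q) v"
  by (simp add: awalk_Cons_iff)

lemma awalk_snoc: "awalk u p (tail G e) \<Longrightarrow> e \<in> arcs G \<Longrightarrow> awalk u (p @ [e]) (head G e)"
  by (simp add: awalk_Cons_iff awalk_Nil_iff)

end

section \<open>Reversing all arcs\<close>

definition reverse_digraph :: "('v, 'e) pre_digraph \<Rightarrow> ('v, 'e) pre_digraph" where
  "reverse_digraph G = \<lparr>verts = verts G, arcs = arcs G, tail = head G, head = tail G\<rparr>"

lemma reverse_digraph_simps [simp]:
  "verts (reverse_digraph G) = verts G" "arcs (reverse_digraph G) = arcs G"
  "tail (reverse_digraph G) = head G" "head (reverse_digraph G) = tail G"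
  by (simp_all add: reverse_digraph_def)

lemma in_degree_reverse_digraph [simp]: "in_degree (reverse_digraph G) v = out_degree G v"
  and out_degree_reverse_digraph [simp]: "out_degree (reverse_digraph G) v = in_degree G v"
  by (simp_all add: in_degree_def out_degree_def in_arcs_def out_arcs_def)

lemma (in pre_digraph) cas_snoc: "cas u (p @ [e]) v \<longleftrightarrow> cas u p (tail G e) \<and> head G e = v"
  by (induction p arbitrary: u) auto

lemma cas_reverse_digraph:
  "pre_digraph.cas (reverse_digraph G) u p v \<longleftrightarrow> pre_digraph.cas G v (rev p) u"
  by (induction p arbitrary: u) (auto simp: pre_digraph.cas.simps pre_digraph.cas_snoc)

context wf_digraph
begin

lemma wf_digraph_reverse_digraph: "wf_digraph (reverse_digraph G)"
  by unfold_locales simp_all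

lemma cas_ends_in_verts: "cas u p v \<Longrightarrow> set p \<subseteq> arcs G \<Longrightarrow> u \<in> verts G \<longleftrightarrow> v \<in> verts G"
  by (induction p arbitrary: u) (auto dest: head_in_verts)

lemma awalk_reverse_digraph_iff:
  "pre_digraph.awalk (reverse_digraph G) u p v \<longleftrightarrow> awalk v (rev p) u"
  using cas_ends_in_verts[of v "rev p" u]
  by (auto simp: pre_digraph.awalk_def cas_reverse_digraph)

end

lemma arc_compressed_reverse_digraph [simp]: "arc_compressed (reverse_digraph G) \<longleftrightarrow> arc_compressed G"
  by (auto simp: arc_compressed_def)

lemma fin_digraph_reverse_digraph: "fin_digraph G \<Longrightarrow> fin_digraph (reverse_digraph G)"
  by (simp add: fin_digraph_def fin_digraph_axioms_def wf_digraph.wf_digraph_reverse_digraph)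

section \<open>Acyclic digraphs\<close>

locale dag = wf_digraph G for G :: "('v, 'e) pre_digraph" +
  assumes acyclic: "is_dag G"
begin

lemma closed_awalk_Nil: "awalk u p u \<Longrightarrow> p = []"
  using acyclic by (simp add: is_dag_def)

lemma apath_iff_awalk: "apath u p v \<longleftrightarrow> awalk u p v"
proof
  assume walk: "awalk u p v"
  show "apath u p v"
  proof (rule ccontr)
    assume "\<not> apath u p v"
    then obtain r w where "0 < length r" "awalk w r w"
      using awalk_not_distinct_decomp[OF walk] walk by (auto simp: apath_def)
    then show False
      using closed_awalk_Nil by fastforce
  qed
qed (simp add: apath_def)

lemma no_awalk_head_to_tail: "e \<in> arcs G \<Longrightarrow> \<not> awalk (head G e) p (tail G e)"
  using closed_awalk_Nil[of "tail G e" "e # p"] by (auto simp: awalk_Cons_iff)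

lemma awalk_distinct_tails: "awalk u p v \<Longrightarrow> distinct (map (tail G) p)"
  using apath_iff_awalk[of u p v] by (auto simp: apath_def awalk_verts_conv split: if_splits)

lemma awalk_distinct_heads: "awalk u p v \<Longrightarrow> distinct (map (head G) p)"
  using apath_iff_awalk[of u p v] by (auto simp: apath_def awalk_verts_conv' split: if_splits)

lemma arc_reaches_iff: "arc_reaches G a b \<longleftrightarrow> (\<exists>p. awalk (head G a) p (tail G b))"
  by (simp add: arc_reaches_def apath_iff_awalk)

lemma arc_reaches_trans:
  "arc_reaches G a b \<Longrightarrow> b \<in> arcs G \<Longrightarrow> arc_reaches G b c \<Longrightarrow> arc_reaches G a c"
  unfolding arc_reaches_iff by (meson awalk_via_arc)

lemma asymp_on_arc_reaches: "asymp_on (arcs G) (arc_reaches G)"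
  unfolding asymp_on_def arc_reaches_iff using awalk_via_arc no_awalk_head_to_tail by blast

lemma awalk_sorted_wrt_arc_reaches: "awalk u p v \<Longrightarrow> sorted_wrt (arc_reaches G) p"
proof (induction p arbitrary: u)
  case Nil
  then show ?case by simp
next
  case (Cons e p)
  then have walk: "awalk (head G e) p v"
    by (simp add: awalk_Cons_iff)
  have "arc_reaches G e f" if "f \<in> set p" for f
    using awalk_split_at_arc[OF walk that] unfolding arc_reaches_iff by blast
  then show ?case
    using Cons.IH[OF walk] by simp
qed

lemma arc_sequence_iff_sorted_wrt:
  "arc_sequence G X \<longleftrightarrow> set X \<subseteq> arcs G \<and> sorted_wrt (arc_reaches G) X"
proof -
  have "successively (arc_reaches G) X \<longleftrightarrow> sorted_wrt (arc_reaches G) X" if "set X \<subseteq> arcs G"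
    using that by (intro successively_iff_sorted_wrt_strong) (auto intro: arc_reaches_trans)
  then show ?thesis
    unfolding arc_sequence_def successively_conv_nth by blast
qed

lemma arc_sequence_unique:
  assumes "arc_sequence G X" "arc_sequence G Y" "set X = set Y"
  shows "X = Y"
  using assms asymp_on_subset[OF asymp_on_arc_reaches]
  by (intro sorted_wrt_unique) (auto simp: arc_sequence_iff_sorted_wrt)

lemma s_dom_iff: "s_dom G s a e \<longleftrightarrow> a = e \<or> (\<forall>p. awalk s p (tail G e) \<longrightarrow> a \<in> set p)"
  by (simp add: s_dom_def apath_iff_awalk)

lemma t_dom_iff: "t_dom G t a e \<longleftrightarrow> a = e \<or> (\<forall>p. awalk (head G e) p t \<longrightarrow> a \<in> set p)"
  by (simp add: t_dom_def apath_iff_awalk)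

lemma bridge_iff: "bridge G x y a \<longleftrightarrow> a \<in> arcs G \<and> (\<forall>p. awalk x p y \<longrightarrow> a \<in> set p)"
  by (simp add: bridge_def apath_iff_awalk)

lemma dag_reverse_digraph: "dag (reverse_digraph G)"
proof -
  have "is_dag (reverse_digraph G)"
    using closed_awalk_Nil by (auto simp: is_dag_def awalk_reverse_digraph_iff)
  then show ?thesis
    by (simp add: dag_def dag_axioms_def wf_digraph_reverse_digraph)
qed

lemma apath_reverse_digraph_iff: "pre_digraph.apath (reverse_digraph G) u p v \<longleftrightarrow> apath v (rev p) u"
  by (simp add: dag.apath_iff_awalk[OF dag_reverse_digraph] apath_iff_awalk awalk_reverse_digraph_iff)

lemma all_apath_reverse_digraph_iff:
  "(\<forall>p. pre_digraph.apath (reverse_digraph G) u p v \<longrightarrow> a \<in> set p) \<longleftrightarrow> (\<forall>p. apath v p u \<longrightarrow> a \<in> set p)"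
  by (metis apath_reverse_digraph_iff rev_rev_ident set_rev)

lemma s_dom_reverse_digraph [simp]: "s_dom (reverse_digraph G) t a e \<longleftrightarrow> t_dom G t a e"
  and t_dom_reverse_digraph [simp]: "t_dom (reverse_digraph G) s a e \<longleftrightarrow> s_dom G s a e"
  by (simp_all add: s_dom_def t_dom_def all_apath_reverse_digraph_iff)

lemma strict_s_dom_reverse_digraph [simp]:
  "strict_s_dom (reverse_digraph G) t a e \<longleftrightarrow> strict_t_dom G t a e"
  by (simp add: strict_s_dom_def strict_t_dom_def)

lemma s_dom_leaf_reverse_digraph [simp]: "s_dom_leaf (reverse_digraph G) t a \<longleftrightarrow> t_dom_leaf G t a"
  by (simp add: t_dom_leaf_def s_dom_leaf_def is_idom_t_def is_idom_s_def)

end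

lemma strict_s_dom_iff_bridge: "strict_s_dom G s a e \<longleftrightarrow> a \<noteq> e \<and> bridge G s (tail G e) a"
  by (auto simp: strict_s_dom_def s_dom_def bridge_def)

section \<open>Safe sequences in s-t DAGs\<close>

locale st_dag_graph = fin_digraph G for G :: "('v, 'e) pre_digraph" +
  fixes s t :: 'v
  assumes st_dag: "st_dag G s t"

sublocale st_dag_graph \<subseteq> dag
  using st_dag by unfold_locales (simp add: st_dag_def)

context st_dag_graph
begin

lemma awalk_from_s: "v \<in> verts G \<Longrightarrow> \<exists>p. awalk s p v"
  and awalk_to_t: "v \<in> verts G \<Longrightarrow> \<exists>p. awalk v p t"
  using st_dag by (auto simp: st_dag_def apath_iff_awalk)

lemma st_dag_graph_reverse_digraph: "st_dag_graph (reverse_digraph G) t s"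
proof -
  interpret rev: dag "reverse_digraph G"
    by (rule dag_reverse_digraph)
  have "\<exists>p. rev.apath t p v" "\<exists>p. rev.apath v p s" if "v \<in> verts G" for v
    using awalk_from_s[OF that] awalk_to_t[OF that]
    by (metis apath_iff_awalk apath_reverse_digraph_iff rev_rev_ident)+
  then have "st_dag (reverse_digraph G) t s"
    using st_dag rev.acyclic fin_digraph_reverse_digraph
    by (auto simp: st_dag_def)
  then show ?thesis
    using fin_digraph_reverse_digraph[OF fin_digraph_axioms]
    by (simp add: st_dag_graph_def st_dag_graph_axioms_def)
qed

lemma set_ext:
  assumes "a \<in> arcs G"
  shows "set (ext G s t a) = {b \<in> arcs G. s_dom G s b a \<or> t_dom G t b a}"
proof -
  have "\<exists>p. apath s p (tail G a)" "\<exists>p. apath (head G a) p t"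
    using assms awalk_from_s awalk_to_t by (simp_all add: apath_iff_awalk)
  then have "apath s (SOME p. apath s p (tail G a)) (tail G a)"
    "apath (head G a) (SOME p. apath (head G a) p t) t"
    by (auto intro: someI_ex)
  then show ?thesis
    using assms by (auto simp: ext_def bridge_def s_dom_def t_dom_def)
qed

lemma awalk_through_arc:
  assumes "a \<in> arcs G"
  obtains P where "awalk s P t" "a \<in> set P"
proof -
  obtain P1 P2 where "awalk s P1 (tail G a)" "awalk (head G a) P2 t"
    using awalk_from_s awalk_to_t assms by (meson head_in_verts tail_in_verts)
  then show thesis
    using that[of "P1 @ a # P2"] awalk_via_arc assms by simp
qed

lemma in_set_ext_iff:
  assumes "a \<in> arcs G"
  shows "b \<in> set (ext G s t a) \<longleftrightarrow> (\<forall>P. awalk s P t \<and> a \<in> set P \<longrightarrow> b \<in> set P)"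
proof
  assume "b \<in> set (ext G s t a)"
  then have dom: "b = a \<or> (\<forall>p. awalk s p (tail G a) \<longrightarrow> b \<in> set p) \<or> (\<forall>p. awalk (head G a) p t \<longrightarrow> b \<in> set p)"
    unfolding set_ext[OF assms] s_dom_iff t_dom_iff by blast
  show "\<forall>P. awalk s P t \<and> a \<in> set P \<longrightarrow> b \<in> set P"
  proof safe
    fix P assume "awalk s P t" "a \<in> set P"
    then obtain P1 P2 where P: "P = P1 @ a # P2" "awalk s P1 (tail G a)" "awalk (head G a) P2 t"
      by (rule awalk_split_at_arc)
    then have "b \<in> set P1 \<or> b = a \<or> b \<in> set P2"
      using dom by blast
    then show "b \<in> set P"
      using P(1) by auto
  qed
next
  assume on_all: "\<forall>P. awalk s P t \<and> a \<in> set P \<longrightarrow> b \<in> set P"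
  show "b \<in> set (ext G s t a)"
  proof (rule ccontr)
    assume not_in: "b \<notin> set (ext G s t a)"
    obtain P where "awalk s P t" "a \<in> set P"
      using awalk_through_arc[OF assms] .
    then have "b \<in> arcs G"
      using on_all by blast
    then have "b \<noteq> a \<and> \<not> (\<forall>p. awalk s p (tail G a) \<longrightarrow> b \<in> set p)
        \<and> \<not> (\<forall>p. awalk (head G a) p t \<longrightarrow> b \<in> set p)"
      using not_in unfolding set_ext[OF assms] s_dom_iff t_dom_iff by blast
    then obtain P1 P2 where "awalk s P1 (tail G a)" "awalk (head G a) P2 t"
      and "b \<notin> set (P1 @ a # P2)"
      by auto
    moreover have "awalk s (P1 @ a # P2) t"
      using calculation(1) assms calculation(2) by (rule awalk_via_arc)
    moreover have "a \<in> set (P1 @ a # P2)"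
      by simp
    ultimately show False
      using on_all by blast
  qed
qed

lemma arc_sequence_ext:
  assumes "a \<in> arcs G"
  shows "arc_sequence G (ext G s t a)"
proof -
  define P1 where "P1 = (SOME p. apath s p (tail G a))"
  define P2 where "P2 = (SOME p. apath (head G a) p t)"
  have "\<exists>p. awalk s p (tail G a)" "\<exists>p. awalk (head G a) p t"
    using assms awalk_from_s awalk_to_t by simp_all
  then have "awalk s P1 (tail G a)" "awalk (head G a) P2 t"
    unfolding P1_def P2_def apath_iff_awalk by (auto intro: someI_ex)
  then have walk: "awalk s (P1 @ a # P2) t"
    using assms awalk_via_arc by blast
  have "ext G s t a = filter (bridge G s (tail G a)) P1 @ a # filter (bridge G (head G a) t) P2"
    by (simp add: ext_def P1_def P2_def)
  moreover have "sorted_wrt (arc_reaches G) (P1 @ a # P2)"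
    using walk by (rule awalk_sorted_wrt_arc_reaches)
  ultimately have "sorted_wrt (arc_reaches G) (ext G s t a)"
    by (auto simp: sorted_wrt_append sorted_wrt_filter)
  then show ?thesis
    using walk by (auto simp: arc_sequence_iff_sorted_wrt set_ext[OF assms])
qed

lemma safe_if_subset_ext:
  assumes "a \<in> arcs G" "arc_sequence G X" "set X \<subseteq> set (ext G s t a)"
  shows "safe G s t X"
proof -
  have on_paths: "subseq_arcs X P" if "awalk s P t" "a \<in> set P" for P
    using assms that in_set_ext_iff unfolding subseq_arcs_def by blast
  obtain P where "awalk s P t" "a \<in> set P"
    using awalk_through_arc[OF assms(1)] .
  then have "\<exists>P. apath s P t \<and> subseq_arcs X P"
    using on_paths apath_iff_awalk by blast
  moreover have "\<exists>P \<in> C. subseq_arcs X P" if cover: "arc_path_cover G s t C" for C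
  proof -
    obtain P where "P \<in> C" "a \<in> set P"
      using cover assms(1) unfolding arc_path_cover_def by blast
    moreover have "awalk s P t"
      using cover calculation(1) unfolding arc_path_cover_def apath_iff_awalk by blast
    ultimately show ?thesis
      using on_paths by blast
  qed
  ultimately show ?thesis
    using assms(2) unfolding safe_def by blast
qed

lemma subset_ext_if_safe:
  assumes "safe G s t X"
  shows "\<exists>a \<in> arcs G. set X \<subseteq> set (ext G s t a)"
proof (rule ccontr)
  assume "\<not> ?thesis"
  then have "\<exists>P. awalk s P t \<and> a \<in> set P \<and> \<not> set X \<subseteq> set P" if "a \<in> arcs G" for a
    using that in_set_ext_iff by blast
  then have "arc_path_cover G s t {P. apath s P t \<and> \<not> set X \<subseteq> set P}"
    by (simp add: arc_path_cover_def apath_iff_awalk) blast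
  then show False
    using assms by (auto simp: safe_def subseq_arcs_def)
qed

lemma maximal_safe_ext_iff:
  assumes "uv \<in> arcs G"
  shows "maximal_safe G s t (ext G s t uv) \<longleftrightarrow> \<not> (\<exists>a \<in> arcs G. set (ext G s t uv) \<subset> set (ext G s t a))"
proof
  assume maximal: "maximal_safe G s t (ext G s t uv)"
  show "\<not> (\<exists>a \<in> arcs G. set (ext G s t uv) \<subset> set (ext G s t a))"
  proof
    assume "\<exists>a \<in> arcs G. set (ext G s t uv) \<subset> set (ext G s t a)"
    then obtain a where a: "a \<in> arcs G" and larger: "set (ext G s t uv) \<subset> set (ext G s t a)"
      by blast
    have "safe G s t (ext G s t a)"
      using safe_if_subset_ext[OF a arc_sequence_ext[OF a]] by simp
    moreover have "ext G s t uv \<noteq> ext G s t a"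
      using larger by auto
    ultimately show False
      using maximal larger by (auto simp: maximal_safe_def subseq_arcs_def)
  qed
next
  assume no_larger: "\<not> (\<exists>a \<in> arcs G. set (ext G s t uv) \<subset> set (ext G s t a))"
  \<comment> \<open>\<open>maximal_safe\<close> compares lists, not sets; an arc sequence is determined by its arcs\<close>
  have "Y = ext G s t uv" if "safe G s t Y" "set (ext G s t uv) \<subseteq> set Y" for Y
  proof (rule arc_sequence_unique)
    show "arc_sequence G Y" "arc_sequence G (ext G s t uv)"
      using that(1) arc_sequence_ext[OF assms] by (simp_all add: safe_def)
    show "set Y = set (ext G s t uv)"
      using subset_ext_if_safe[OF that(1)] that(2) no_larger by blast
  qed
  then show "maximal_safe G s t (ext G s t uv)"
    using safe_if_subset_ext[OF assms arc_sequence_ext[OF assms]]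
    by (auto simp: maximal_safe_def subseq_arcs_def)
qed

section \<open>Leaves of the dominator trees\<close>

lemma set_ext_subset_if_in:
  assumes "b \<in> arcs G" "a \<in> set (ext G s t b)"
  shows "set (ext G s t a) \<subseteq> set (ext G s t b)"
proof -
  have "a \<in> arcs G"
    using assms by (simp add: set_ext)
  show ?thesis
  proof
    fix c assume "c \<in> set (ext G s t a)"
    then have "\<forall>P. awalk s P t \<and> a \<in> set P \<longrightarrow> c \<in> set P"
      unfolding in_set_ext_iff[OF \<open>a \<in> arcs G\<close>] .
    moreover have "\<forall>P. awalk s P t \<and> b \<in> set P \<longrightarrow> a \<in> set P"
      using assms(2) unfolding in_set_ext_iff[OF assms(1)] .
    ultimately show "c \<in> set (ext G s t b)"
      unfolding in_set_ext_iff[OF assms(1)] by blast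
  qed
qed

lemma strict_s_dom_headD:
  assumes "strict_s_dom G s uv e" "e \<in> arcs G"
  shows "bridge G s (head G uv) uv" "out_arcs G (head G uv) \<noteq> {}"
proof -
  have uv: "uv \<in> arcs G" and dom: "\<forall>p. awalk s p (tail G e) \<longrightarrow> uv \<in> set p"
    using assms(1) by (simp_all add: strict_s_dom_iff_bridge bridge_iff)
  obtain P where P: "awalk s P (tail G e)"
    using awalk_from_s[OF tail_in_verts[OF assms(2)]] by blast
  moreover have "uv \<in> set P"
    using P dom by blast
  ultimately obtain P1 P2 where "P = P1 @ uv # P2" "awalk s P1 (tail G uv)"
    and P2: "awalk (head G uv) P2 (tail G e)"
    by (rule awalk_split_at_arc)
  have "uv \<notin> set P2"
  proof
    assume "uv \<in> set P2"
    with P2 obtain Q1 Q2 where "P2 = Q1 @ uv # Q2" "awalk (head G uv) Q1 (tail G uv)"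
      and "awalk (head G uv) Q2 (tail G e)"
      by (rule awalk_split_at_arc)
    then show False
      using no_awalk_head_to_tail[OF uv] by blast
  qed
  have "uv \<in> set Q" if "awalk s Q (head G uv)" for Q
  proof -
    have "uv \<in> set (Q @ P2)"
      using dom awalk_appendI[OF that P2] by blast
    then show ?thesis
      using \<open>uv \<notin> set P2\<close> by simp
  qed
  then show "bridge G s (head G uv) uv"
    using uv by (simp add: bridge_iff)
  have "awalk (head G uv) (P2 @ [e]) (head G e)"
    using P2 assms(2) by (rule awalk_snoc)
  then show "out_arcs G (head G uv) \<noteq> {}"
    by (cases "P2 @ [e]") (auto simp: awalk_Cons_iff)
qed

lemma is_idom_s_if_head_bridge:
  assumes bridge: "bridge G s (head G uv) uv" and f: "f \<in> out_arcs G (head G uv)"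
  shows "is_idom_s G s uv f"
proof -
  have uv: "uv \<in> arcs G"
    using bridge by (simp add: bridge_def)
  have "uv \<noteq> f"
    using f no_awalk_head_to_tail[OF uv, of "[]"] by (auto simp: awalk_Nil_iff)
  then have strict: "strict_s_dom G s uv f"
    using bridge f by (simp add: strict_s_dom_iff_bridge)
  have "s_dom G s y uv" if "strict_s_dom G s y f" for y
  proof -
    have y_dom: "\<forall>p. awalk s p (head G uv) \<longrightarrow> y \<in> set p"
      using that f by (simp add: strict_s_dom_iff_bridge bridge_iff)
    have "y \<in> set (R @ [uv])" if R: "awalk s R (tail G uv)" for R
      using y_dom awalk_snoc[OF R uv] by blast
    then show ?thesis
      by (auto simp: s_dom_iff)
  qed
  then show ?thesis
    using strict by (simp add: is_idom_s_def)
qed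

lemma in_arcs_head_if_head_bridge:
  assumes "bridge G s (head G uv) uv"
  shows "in_arcs G (head G uv) = {uv}"
proof -
  have "g = uv" if g: "g \<in> in_arcs G (head G uv)" for g
  proof -
    have g_arc: "g \<in> arcs G"
      using g by simp
    obtain P where "awalk s P (tail G g)"
      using awalk_from_s[OF tail_in_verts[OF g_arc]] by blast
    then have walk: "awalk s (P @ [g]) (head G uv)"
      using g awalk_snoc[OF _ g_arc] by simp
    then have "uv \<in> set (P @ [g])"
      using assms unfolding bridge_iff by blast
    then show "g = uv"
      using awalk_distinct_heads[OF walk] g by (auto simp: inj_on_def)
  qed
  then show ?thesis
    using assms by (auto simp: bridge_def)
qed

lemma s_dom_leaf_iff:
  "s_dom_leaf G s uv \<longleftrightarrow> (\<forall>e \<in> arcs G. \<not> strict_s_dom G s uv e)"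
proof
  assume leaf: "s_dom_leaf G s uv"
  show "\<forall>e \<in> arcs G. \<not> strict_s_dom G s uv e"
  proof (intro ballI notI)
    fix e assume "e \<in> arcs G" "strict_s_dom G s uv e"
    note head = strict_s_dom_headD[OF this(2,1)]
    then obtain f where "f \<in> out_arcs G (head G uv)"
      by blast
    then show False
      using leaf is_idom_s_if_head_bridge[OF head(1)] by (auto simp: s_dom_leaf_def)
  qed
qed (auto simp: s_dom_leaf_def is_idom_s_def)

lemma two_out_arcs_if_strict_s_dom:
  assumes "arc_compressed G" "strict_s_dom G s uv e" "e \<in> arcs G"
  obtains f f' where "f \<in> out_arcs G (head G uv)" "f' \<in> out_arcs G (head G uv)" "f \<noteq> f'"
proof -
  note head = strict_s_dom_headD[OF assms(2,3)]
  have "in_degree G (head G uv) = 1"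
    using in_arcs_head_if_head_bridge[OF head(1)] by (simp add: in_degree_def)
  moreover have "head G uv \<in> verts G"
    using assms(2) by (simp add: strict_s_dom_def)
  ultimately have "out_degree G (head G uv) \<noteq> 1"
    using assms(1) unfolding arc_compressed_def by blast
  moreover have "out_degree G (head G uv) \<noteq> 0"
    using head(2) finite_out_arcs by (simp add: out_degree_def)
  ultimately have "\<not> card (out_arcs G (head G uv)) \<le> 1"
    by (simp add: out_degree_def)
  then show thesis
    using that card_le_Suc0_iff_eq[OF finite_out_arcs] by auto
qed

lemma ext_psubset_if_strict_s_dom:
  assumes "arc_compressed G" "strict_s_dom G s uv e" "e \<in> arcs G"
  shows "\<exists>a \<in> arcs G. set (ext G s t uv) \<subset> set (ext G s t a)"
proof -
  obtain f f' where f: "f \<in> out_arcs G (head G uv)" and f': "f' \<in> out_arcs G (head G uv)"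
    and "f \<noteq> f'"
    using two_out_arcs_if_strict_s_dom[OF assms] .
  have uv: "uv \<in> arcs G" and f_arc: "f \<in> arcs G" and f'_arc: "f' \<in> arcs G"
    using assms(2) f f' by (simp_all add: strict_s_dom_def)
  have "strict_s_dom G s uv f"
    using is_idom_s_if_head_bridge[OF strict_s_dom_headD(1)[OF assms(2,3)] f]
    by (simp add: is_idom_s_def)
  then have "uv \<in> set (ext G s t f)"
    using f_arc uv by (simp add: set_ext strict_s_dom_def)
  then have "set (ext G s t uv) \<subseteq> set (ext G s t f)"
    using f_arc by (intro set_ext_subset_if_in)
  moreover have "f \<in> set (ext G s t f)"
    using f_arc by (simp add: set_ext s_dom_def)
  moreover have "f \<notin> set (ext G s t uv)"
  proof -
    \<comment> \<open>an s-t path through \<open>uv\<close> and its sibling \<open>f'\<close> cannot also use \<open>f\<close>\<close>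
    obtain P1 P2 where "awalk s P1 (tail G uv)" "awalk (head G f') P2 t"
      using awalk_from_s[OF tail_in_verts[OF uv]] awalk_to_t[OF head_in_verts[OF f'_arc]] by blast
    then have walk: "awalk s (P1 @ uv # f' # P2) t"
      using uv f' by (simp add: awalk_via_arc awalk_Cons_iff)
    have "inj_on (tail G) (set (P1 @ uv # f' # P2))"
      using awalk_distinct_tails[OF walk] by (simp only: distinct_map)
    moreover have "tail G f = tail G f'" "f' \<in> set (P1 @ uv # f' # P2)"
      using f f' by simp_all
    ultimately have "f \<notin> set (P1 @ uv # f' # P2)"
      using \<open>f \<noteq> f'\<close> inj_onD by metis
    moreover have "uv \<in> set (P1 @ uv # f' # P2)"
      by simp
    ultimately show ?thesis
      using walk in_set_ext_iff[OF uv] by blast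
  qed
  ultimately show ?thesis
    using f_arc by blast
qed

lemma set_ext_reverse_digraph:
  assumes "a \<in> arcs G"
  shows "set (ext (reverse_digraph G) t s a) = set (ext G s t a)"
proof -
  interpret rev: st_dag_graph "reverse_digraph G" t s
    by (rule st_dag_graph_reverse_digraph)
  show ?thesis
    using assms rev.set_ext set_ext by auto
qed

lemma t_dom_leaf_iff:
  "t_dom_leaf G t uv \<longleftrightarrow> (\<forall>e \<in> arcs G. \<not> strict_t_dom G t uv e)"
proof -
  interpret rev: st_dag_graph "reverse_digraph G" t s
    by (rule st_dag_graph_reverse_digraph)
  show ?thesis
    using rev.s_dom_leaf_iff[of uv] by simp
qed

lemma ext_psubset_if_strict_t_dom:
  assumes "arc_compressed G" "strict_t_dom G t uv e" "e \<in> arcs G"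
  shows "\<exists>a \<in> arcs G. set (ext G s t uv) \<subset> set (ext G s t a)"
proof -
  interpret rev: st_dag_graph "reverse_digraph G" t s
    by (rule st_dag_graph_reverse_digraph)
  have "uv \<in> arcs G"
    using assms(2) by (simp add: strict_t_dom_def)
  moreover obtain a where "a \<in> arcs G" "set (ext (reverse_digraph G) t s uv) \<subset> set (ext (reverse_digraph G) t s a)"
    using rev.ext_psubset_if_strict_s_dom[of uv e] assms by auto
  ultimately show ?thesis
    using set_ext_reverse_digraph by auto
qed

lemma strict_dom_if_ext_psubset:
  assumes "uv \<in> arcs G" "a \<in> arcs G" "set (ext G s t uv) \<subset> set (ext G s t a)"
  shows "strict_s_dom G s uv a \<or> strict_t_dom G t uv a"
proof -
  have "uv \<in> set (ext G s t uv)"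
    using assms(1) by (simp add: set_ext s_dom_def)
  then have "uv \<in> set (ext G s t a)"
    using assms(3) by blast
  moreover have "uv \<noteq> a"
    using assms(3) by blast
  ultimately show ?thesis
    using assms(2) by (auto simp: set_ext strict_s_dom_def strict_t_dom_def)
qed

lemma maximal_safe_ext_iff_dom_leaf:
  assumes "arc_compressed G" "uv \<in> arcs G"
  shows "maximal_safe G s t (ext G s t uv) \<longleftrightarrow> s_dom_leaf G s uv \<and> t_dom_leaf G t uv"
proof -
  have "(\<exists>a \<in> arcs G. set (ext G s t uv) \<subset> set (ext G s t a))
      \<longleftrightarrow> (\<exists>e \<in> arcs G. strict_s_dom G s uv e \<or> strict_t_dom G t uv e)"
    using strict_dom_if_ext_psubset[OF assms(2)]
      ext_psubset_if_strict_s_dom[OF assms(1)] ext_psubset_if_strict_t_dom[OF assms(1)]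
    by blast
  then show ?thesis
    unfolding maximal_safe_ext_iff[OF assms(2)] s_dom_leaf_iff t_dom_leaf_iff by blast
qed

end

theorem theorem8:
  fixes G :: "('v,'e) pre_digraph" and s t :: 'v and uv :: 'e
  assumes "st_dag G s t" and "arc_compressed G" and "uv \<in> arcs G"
  shows "maximal_safe G s t (ext G s t uv) \<longleftrightarrow> s_dom_leaf G s uv \<and> t_dom_leaf G t uv"
proof -
  interpret st_dag_graph G s t
    using assms(1) by (simp add: st_dag_graph_def st_dag_graph_axioms_def st_dag_def)
  show ?thesis
    using assms(2,3) by (rule maximal_safe_ext_iff_dom_leaf)
qed

end
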